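(* Let $\sigma>0$, $\bar\gamma>0$, $c_\infty\ge0$, and for $\gamma\in(0,\bar\gamma]$ let $\tau_\gamma:[0,\infty)\to[0,\infty)$ be non-decreasing with $\tau_\gamma(0)=0$, such that there exist $R_1,L\ge0$, $m>0$ with $\sup_{r>0}\tau_\gamma(r)/r\le1+\gamma L$ and $\sup_{r>R_1}\tau_\gamma(r)/r\le1-\gamma m$ for all $\gamma\in(0,\bar\gamma]$. Let $Q_\gamma$ be the Markov kernel on $[0,\infty)$ $$Q_\gamma(w,A)=\delta_0(A)\int_{\mathbb{R}}\bar p_{\sigma^2\gamma}(\tau_\gamma(w)+\gamma c_\infty,g)\varphi(g)dg+\int_{\mathbb{R}}\mathbb{1}_A(\tau_\gamma(w)+\gamma c_\infty-2\sigma\gamma^{1/2}g)\{1-\bar p_{\sigma^2\gamma}(\tau_\gamma(w)+\gamma c_\infty,g)\}\varphi(g)dg,$$ with $\bar p_{\sigma^2\gamma}(a,g)=1\wedge\varphi_{\sigma^2\gamma}(a-\sigma\sqrt\gamma g)/\varphi_{\sigma^2\gamma}(\sigma\sqrt\gamma g)$, and let $\mu_\gamma$ be its unique invariant probability measure. Let $\zeta=2(1+\bar\gamma L)^2\sigma^2(2\sqrt{2\pi})^{-1}[\sup_{t\ge0}\{t^2\Phi(-t)\}+1/8]$ and $R\ge0$. Then for any $\gamma\in(0,\bar\gamma]$ and $\bar\delta\in(0,\{L^{-1}\wedge(\sigma e^{-1}/c_\infty)^2\}]$ (convention $1/0=+\infty$), $\mu_\gamma((0,R))\le\eta_Rc_\infty$,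 where $$\eta_R=[\bar\delta+\bar\gamma]^{1/2}\Big[\frac{2\zeta e^{3(\bar\delta+\bar\gamma)L}}{\sigma^3}+\frac{e^{(\bar\delta+\bar\gamma)L}}{2\sqrt{2\pi}\sigma}\Big]\Big/\Phi\Big(-\frac{(1+\bar\gamma L)R+(\bar\delta+\bar\gamma)c_\infty}{2\bar\delta^{1/2}\sigma e^{-(\bar\delta+\bar\gamma)L}}\Big).$$
   Context: $\varphi$ and $\Phi$ are the standard normal density and distribution function; $\varphi_s(t)=(2\pi s)^{-1/2}e^{-t^2/(2s)}$. *)

theory Defs
  imports "HOL-Probability.Probability"
begin

definition phi_var :: "real \<Rightarrow> real \<Rightarrow> real" where
  "phi_var s t = exp (- (t\<^sup>2) / (2 * s)) / sqrt (2 * pi * s)"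

definition phi :: "real \<Rightarrow> real" where
  "phi t = phi_var 1 t"

definition Phi :: "real \<Rightarrow> real" where
  "Phi x = (\<integral>t\<in>{..x}. phi t \<partial>lborel)"

definition pbar :: "real \<Rightarrow> real \<Rightarrow> real \<Rightarrow> real \<Rightarrow> real" where
  "pbar \<sigma> \<gamma> a g =
     min 1 (phi_var (\<sigma>\<^sup>2 * \<gamma>) (a - \<sigma> * sqrt \<gamma> * g) / phi_var (\<sigma>\<^sup>2 * \<gamma>) (\<sigma> * sqrt \<gamma> * g))"

definition Qker :: "real \<Rightarrow> real \<Rightarrow> real \<Rightarrow> (real \<Rightarrow> real) \<Rightarrow> real \<Rightarrow> real set \<Rightarrow> real" where
  "Qker \<sigma> \<gamma> c \<tau> w A =
     indicator A 0 * (\<integral>g. pbar \<sigma> \<gamma> (\<tau> w + \<gamma> * c) g * phi g \<partial>lborel)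
     + (\<integral>g. indicator A (\<tau> w + \<gamma> * c - 2 * \<sigma> * sqrt \<gamma> * g)
              * (1 - pbar \<sigma> \<gamma> (\<tau> w + \<gamma> * c) g) * phi g \<partial>lborel)"

text \<open>Invariant probability measures of Q on [0,\<infinity>) (represented as Borel
  probability measures on the reals concentrated on [0,\<infinity>)).\<close>
definition invariant_prob :: "(real \<Rightarrow> real set \<Rightarrow> real) \<Rightarrow> real measure \<Rightarrow> bool" where
  "invariant_prob Q \<nu> \<longleftrightarrow> prob_space \<nu> \<and> sets \<nu> = sets borel \<and> measure \<nu> {0..} = 1 \<and>
     (\<forall>A\<in>sets borel. measure \<nu> A = (\<integral>w. Q w A \<partial>\<nu>))"

end

theory Submission
  imports Defs
begin

text \<open>
  For b \<ge> 0 let H_b(w) = P(b |Z| < w) for a standard Gaussian Z (abs_normal_cdf b w).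
  By Fubini, \<integral> H_b d\<mu> = E \<mu>((b |Z|, \<infinity>)). Invariance writes \<mu>((r, \<infinity>)) as
  \<integral> Q(w, (r, \<infinity>)) \<mu>(dw), the kernel tail is an explicit difference of two values of
  Phi, and integrating Z out gives \<integral> H_b d\<mu> \<le> \<integral> H_b'(\<tau>(w) + \<gamma> c) \<mu>(dw) with
  b'^2 = b^2 + 4 \<sigma>^2 \<gamma>. Since \<tau>(w) \<le> (1 + \<gamma> L) w and Phi is 1/sqrt(2 pi)-Lipschitz,
  the right side is at most \<integral> H_(b' / (1 + \<gamma> L)) d\<mu> + 2 \<gamma> c / (sqrt(2 pi) b').
  Iterating n \<approx> \<delta>/\<gamma> times from b = 0 yields
  \<integral> (H_0 - H_b_n) d\<mu> \<le> c sqrt(n \<gamma>) (1 + \<gamma> L)^n / (\<sigma> sqrt(2 pi)),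
  while H_0 - H_b_n \<ge> 2 Phi(-R / b_n) on (0, R). The constant \<eta> of the theorem dominates
  the resulting bound because sup t^2 Phi(-t) \<ge> Phi(-1) \<ge> 1/8.
\<close>

section \<open>The standard Gaussian distribution function\<close>

lemma phi_eq_std_normal_density: "phi t = std_normal_density t"
  by (simp add: phi_def phi_var_def std_normal_density_def divide_simps)

lemma phi_shift_eq_normal_density: "phi (t - d) = normal_density d 1 t"
  by (simp add: phi_def phi_var_def normal_density_def divide_simps)

lemma normal_density_scale: "s > 0 \<Longrightarrow> normal_density 0 s (s * u) = phi u / s"
  by (simp add: normal_density_def phi_def phi_var_def real_sqrt_mult power_mult_distrib field_simps)

lemma phi_minus [simp]: "phi (- t) = phi t"
  by (simp add: phi_eq_std_normal_density std_normal_density_def)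

lemma phi_nonneg [simp]: "0 \<le> phi t"
  by (simp add: phi_eq_std_normal_density)

lemma phi_le: "phi t \<le> 1 / sqrt (2 * pi)"
  by (simp add: phi_eq_std_normal_density std_normal_density_def divide_simps)

lemma phi_antimono_abs: "\<bar>t\<bar> \<le> \<bar>u\<bar> \<Longrightarrow> phi u \<le> phi t"
  by (simp add: phi_eq_std_normal_density std_normal_density_def divide_right_mono
      flip: abs_le_square_iff)

lemma borel_measurable_phi [measurable]: "phi \<in> borel_measurable borel"
  unfolding phi_eq_std_normal_density[abs_def] by simp

lemma integrable_phi [simp]: "integrable lborel phi"
  unfolding phi_eq_std_normal_density[abs_def] by simp

lemma integral_phi: "(\<integral>t. phi t \<partial>lborel) = 1"
  unfolding phi_eq_std_normal_density[abs_def] by simp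

lemma integrable_indicator_mult_phi_shift [simp]:
  assumes "S \<in> sets borel"
  shows "integrable lborel (\<lambda>t. indicator S t * phi (t - d))"
proof -
  have "integrable lborel (\<lambda>t. normal_density d 1 t * indicator S t)"
    by (rule integrable_real_mult_indicator) (use assms in auto)
  then show ?thesis by (simp add: phi_shift_eq_normal_density mult.commute)
qed

lemma integrable_indicator_mult_phi [simp]:
  "S \<in> sets borel \<Longrightarrow> integrable lborel (\<lambda>t. indicator S t * phi t)"
  using integrable_indicator_mult_phi_shift[of S 0] by simp

lemma Phi_eq_integral: "Phi x = (\<integral>t. indicator {..x} t * phi t \<partial>lborel)"
  by (simp add: Phi_def set_lebesgue_integral_def)

lemma Phi_eq_integral_lessThan: "Phi x = (\<integral>t. indicator {..<x} t * phi t \<partial>lborel)"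
proof -
  have "AE t in lborel. indicator {..x} t * phi t = indicator {..<x} t * phi t"
    using AE_lborel_singleton[of x] by eventually_elim (auto simp: indicator_def)
  then show ?thesis
    unfolding Phi_eq_integral by (rule integral_cong_AE[rotated 2]) auto
qed

lemma Phi_minus: "Phi (- x) = 1 - Phi x"
proof -
  have "Phi (- x) = (\<integral>t. indicator {..- x} (0 + -1 * t) * phi (0 + -1 * t) \<partial>lborel)"
    unfolding Phi_eq_integral by (subst lborel_integral_real_affine[where c="-1" and t=0]) auto
  also have "\<dots> = (\<integral>t. indicator {x..} t * phi t \<partial>lborel)"
    by (rule Bochner_Integration.integral_cong) (auto simp: indicator_def)
  finally have upper: "Phi (- x) = (\<integral>t. indicator {x..} t * phi t \<partial>lborel)" .
  have "1 = (\<integral>t. indicator {..<x} t * phi t + indicator {x..} t * phi t \<partial>lborel)"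
    unfolding integral_phi[symmetric]
    by (rule Bochner_Integration.integral_cong) (auto simp: indicator_def)
  also have "\<dots> = Phi x + Phi (- x)"
    by (subst Bochner_Integration.integral_add) (auto simp: upper Phi_eq_integral_lessThan[of x])
  finally show ?thesis by simp
qed

lemma Phi_0: "Phi 0 = 1 / 2"
  using Phi_minus[of 0] by simp

lemma Phi_mono: "x \<le> y \<Longrightarrow> Phi x \<le> Phi y"
  unfolding Phi_eq_integral
  by (rule integral_mono[OF integrable_indicator_mult_phi integrable_indicator_mult_phi])
     (auto simp: indicator_def)

lemma borel_measurable_Phi [measurable]: "Phi \<in> borel_measurable borel"
  by (rule borel_measurable_mono) (auto simp: mono_def Phi_mono)

lemma Phi_nonneg: "0 \<le> Phi x"
  unfolding Phi_eq_integral by (rule integral_nonneg_AE) auto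

lemma Phi_le_1: "Phi x \<le> 1"
  using Phi_nonneg[of "- x"] Phi_minus[of x] by simp

lemma Phi_diff_eq_integral:
  assumes "x \<le> y"
  shows "Phi y - Phi x = (\<integral>t. indicator {x<..y} t * phi t \<partial>lborel)"
proof -
  have "Phi y = (\<integral>t. indicator {..x} t * phi t + indicator {x<..y} t * phi t \<partial>lborel)"
    unfolding Phi_eq_integral
    by (rule Bochner_Integration.integral_cong) (use assms in \<open>auto simp: indicator_def\<close>)
  also have "\<dots> = Phi x + (\<integral>t. indicator {x<..y} t * phi t \<partial>lborel)"
    by (subst Bochner_Integration.integral_add) (auto simp: Phi_eq_integral)
  finally show ?thesis by simp
qed

lemma Phi_diff_le:
  assumes "x \<le> y"
  shows "Phi y - Phi x \<le> (y - x) / sqrt (2 * pi)"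
proof -
  have "Phi y - Phi x \<le> (\<integral>t. indicator {x<..y} t * (1 / sqrt (2 * pi)) \<partial>lborel)"
    unfolding Phi_diff_eq_integral[OF assms]
    by (intro integral_mono integrable_indicator_mult_phi integrable_mult_left integrable_real_indicator)
       (use assms in \<open>auto simp: indicator_def phi_le\<close>)
  also have "\<dots> = (y - x) / sqrt (2 * pi)"
    using assms by simp
  finally show ?thesis .
qed

lemma Phi_pos: "0 < Phi x"
proof -
  have "phi (\<bar>x\<bar> + 1) = (\<integral>t. indicator {x - 1<..x} t * phi (\<bar>x\<bar> + 1) \<partial>lborel)"
    by simp
  also have "\<dots> \<le> (\<integral>t. indicator {x - 1<..x} t * phi t \<partial>lborel)"
    by (intro integral_mono integrable_indicator_mult_phi integrable_mult_left integrable_real_indicator)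
       (auto simp: indicator_def intro!: phi_antimono_abs)
  also have "\<dots> = Phi x - Phi (x - 1)"
    by (subst Phi_diff_eq_integral) auto
  moreover have "0 < phi (\<bar>x\<bar> + 1)"
    by (simp add: phi_eq_std_normal_density std_normal_density_def)
  ultimately show ?thesis
    using Phi_nonneg[of "x - 1"] by linarith
qed

lemma Phi_shift:
  assumes "c > 0"
  shows "(\<integral>g. indicator {g. c * g < u} g * phi (g - d) \<partial>lborel) = Phi (u / c - d)"
proof -
  have "(\<integral>g. indicator {g. c * g < u} g * phi (g - d) \<partial>lborel)
      = (\<integral>g. indicator {g. c * g < u} (d + 1 * g) * phi ((d + 1 * g) - d) \<partial>lborel)"
    by (subst lborel_integral_real_affine[where c=1 and t=d]) auto
  also have "\<dots> = (\<integral>g. indicator {..< u / c - d} g * phi g \<partial>lborel)"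
    by (rule Bochner_Integration.integral_cong)
       (use assms in \<open>auto simp: indicator_def field_simps\<close>)
  finally show ?thesis by (simp add: Phi_eq_integral_lessThan)
qed

lemma nn_integral_normal_density_atMost:
  assumes "s > 0"
  shows "(\<integral>\<^sup>+u. ennreal (indicator {..x} u * normal_density 0 s u) \<partial>lborel) = Phi (x / s)"
proof -
  have "(\<integral>\<^sup>+u. ennreal (indicator {..x} u * normal_density 0 s u) \<partial>lborel)
      = ennreal s * (\<integral>\<^sup>+u. ennreal (indicator {..x} (0 + s * u) * normal_density 0 s (0 + s * u)) \<partial>lborel)"
    using assms by (subst nn_integral_real_affine[where c=s and t=0]) auto
  also have "\<dots> = (\<integral>\<^sup>+u. ennreal s * ennreal (indicator {..x / s} u * phi u / s) \<partial>lborel)"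
  proof (subst nn_integral_cmult[symmetric], simp, intro nn_integral_cong)
    fix u
    have "(s * u \<le> x) = (u \<le> x / s)"
      using assms by (simp add: pos_le_divide_eq mult.commute[of s u])
    then show "ennreal s * ennreal (indicator {..x} (0 + s * u) * normal_density 0 s (0 + s * u))
        = ennreal s * ennreal (indicator {..x / s} u * phi u / s)"
      using assms by (simp add: normal_density_scale indicator_def)
  qed
  also have "\<dots> = (\<integral>\<^sup>+u. ennreal (indicator {..x / s} u * phi u) \<partial>lborel)"
    using assms by (intro nn_integral_cong) (simp add: ennreal_mult[symmetric])
  also have "\<dots> = Phi (x / s)"
    by (subst nn_integral_eq_integral) (auto simp: Phi_eq_integral)
  finally show ?thesis .
qed

text \<open>Phi((x + b Z) / c) averages to the probability that c Z' - b Z \<le> x for independent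
  standard Gaussians Z, Z', and c Z' - b Z is centred Gaussian with variance b^2 + c^2.\<close>
lemma nn_integral_Phi_affine_mult_phi:
  assumes c: "c > 0" and b: "b > 0"
  shows "(\<integral>\<^sup>+z. ennreal (Phi ((x + b * z) / c) * phi z) \<partial>lborel) = Phi (x / sqrt (b\<^sup>2 + c\<^sup>2))"
proof -
  have "(\<integral>\<^sup>+y. ennreal (Phi ((x + y) / c) * normal_density 0 b y) \<partial>lborel)
      = (\<integral>\<^sup>+z. ennreal b * ennreal (Phi ((x + (0 + b * z)) / c) * normal_density 0 b (0 + b * z)) \<partial>lborel)"
    using b by (subst nn_integral_real_affine[where c=b and t=0]) (auto simp: nn_integral_cmult)
  also have "\<dots> = (\<integral>\<^sup>+z. ennreal (Phi ((x + b * z) / c) * phi z) \<partial>lborel)"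
    using b by (intro nn_integral_cong) (simp add: normal_density_scale ennreal_mult[symmetric] Phi_nonneg)
  finally have scaled: "(\<integral>\<^sup>+z. ennreal (Phi ((x + b * z) / c) * phi z) \<partial>lborel)
      = (\<integral>\<^sup>+y. ennreal (Phi ((x + y) / c) * normal_density 0 b y) \<partial>lborel)" ..
  have Phi_as_integral: "ennreal (Phi ((x - y) / c))
      = (\<integral>\<^sup>+u. ennreal (indicator {..x} u * normal_density 0 c (u - y)) \<partial>lborel)" for y
  proof -
    have "ennreal (Phi ((x - y) / c))
        = (\<integral>\<^sup>+u. ennreal (indicator {..x - y} (-y + 1 * u) * normal_density 0 c (-y + 1 * u)) \<partial>lborel)"
      using nn_integral_normal_density_atMost[OF c, of "x - y"]
      by (subst (asm) nn_integral_real_affine[where c=1 and t="-y"]) auto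
    then show ?thesis by (simp add: indicator_def)
  qed
  have "(\<integral>\<^sup>+y. ennreal (Phi ((x + y) / c) * normal_density 0 b y) \<partial>lborel)
      = (\<integral>\<^sup>+y. ennreal (normal_density 0 b y) * ennreal (Phi ((x - y) / c)) \<partial>lborel)"
    by (subst nn_integral_real_affine[where c="-1" and t=0])
       (auto intro!: nn_integral_cong simp: normal_density_def ennreal_mult[symmetric] Phi_nonneg)
  also have "\<dots> = (\<integral>\<^sup>+y. (\<integral>\<^sup>+u. ennreal (normal_density 0 b y)
      * ennreal (indicator {..x} u * normal_density 0 c (u - y)) \<partial>lborel) \<partial>lborel)"
    by (simp add: Phi_as_integral nn_integral_cmult)
  also have "\<dots> = (\<integral>\<^sup>+u. (\<integral>\<^sup>+y. ennreal (normal_density 0 b y)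
      * ennreal (indicator {..x} u * normal_density 0 c (u - y)) \<partial>lborel) \<partial>lborel)"
    by (rule lborel_pair.Fubini') measurable
  also have "\<dots> = (\<integral>\<^sup>+u. ennreal (indicator {..x} u)
      * (\<integral>\<^sup>+y. ennreal (normal_density 0 c (u - y) * normal_density 0 b y) \<partial>lborel) \<partial>lborel)"
    by (intro nn_integral_cong, subst nn_integral_cmult[symmetric])
       (auto intro!: nn_integral_cong simp: ennreal_mult[symmetric] mult.commute mult.left_commute)
  also have "\<dots> = (\<integral>\<^sup>+u. ennreal (indicator {..x} u * normal_density 0 (sqrt (c\<^sup>2 + b\<^sup>2)) u) \<partial>lborel)"
    using fun_cong[OF conv_normal_density_zero_mean[OF c b]]
    by (auto intro!: nn_integral_cong simp: ennreal_mult[symmetric])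
  also have "\<dots> = Phi (x / sqrt (b\<^sup>2 + c\<^sup>2))"
    using c by (subst nn_integral_normal_density_atMost) (auto simp: add.commute add_nonneg_pos)
  finally show ?thesis using scaled by simp
qed

lemma integral_Phi_affine_mult_phi:
  assumes c: "c > 0" and b: "b \<ge> 0"
  shows "(\<integral>z. Phi ((x + b * z) / c) * phi z \<partial>lborel) = Phi (x / sqrt (b\<^sup>2 + c\<^sup>2))"
proof (cases "b = 0")
  case True
  then show ?thesis using c by (simp add: integral_phi)
next
  case False
  have "integrable lborel (\<lambda>z. Phi ((x + b * z) / c) * phi z)"
    by (rule Bochner_Integration.integrable_bound[OF integrable_phi])
       (auto simp: Phi_nonneg Phi_le_1 intro!: mult_left_le_one_le)
  then have "ennreal (\<integral>z. Phi ((x + b * z) / c) * phi z \<partial>lborel) = Phi (x / sqrt (b\<^sup>2 + c\<^sup>2))"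
    using nn_integral_Phi_affine_mult_phi[OF c, of b x] False b
    by (subst nn_integral_eq_integral[symmetric]) (auto simp: Phi_nonneg)
  then show ?thesis
    by (subst (asm) ennreal_inj) (auto simp: Phi_nonneg intro!: integral_nonneg_AE)
qed

lemma sq_mult_Phi_minus_le_1:
  assumes t: "t > 0"
  shows "t\<^sup>2 * Phi (- t) \<le> 1"
proof -
  have "Phi (- t) \<le> (\<integral>x. phi x * x ^ 2 / t\<^sup>2 \<partial>lborel)"
    unfolding Phi_eq_integral
  proof (intro integral_mono)
    show "integrable lborel (\<lambda>x. phi x * x ^ 2 / t\<^sup>2)"
      using integrable_std_normal_moment[of 2] by (simp add: phi_eq_std_normal_density[abs_def])
    show "indicator {..- t} x * phi x \<le> phi x * x ^ 2 / t\<^sup>2" for x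
    proof (cases "x \<le> - t")
      case True
      then have "1 \<le> x ^ 2 / t\<^sup>2"
        using t power_mono[of t "- x" 2] by simp
      then show ?thesis
        using True mult_left_mono[of 1 "x ^ 2 / t\<^sup>2" "phi x"] by simp
    qed simp
  qed simp
  also have "\<dots> = 1 / t\<^sup>2"
    using integral_std_normal_moment_even[of 1] by (simp add: phi_eq_std_normal_density[abs_def])
  finally show ?thesis using t by (simp add: field_simps)
qed

lemma phi_le_quartic: "phi t \<le> (1 - t\<^sup>2 / 2 + t ^ 4 / 8) / sqrt (2 * pi)"
proof -
  obtain u where "exp (- (t\<^sup>2 / 2))
      = (\<Sum>m<3. (- (t\<^sup>2 / 2)) ^ m / fact m) + exp u / fact 3 * (- (t\<^sup>2 / 2)) ^ 3"
    using Maclaurin_exp_le[of "- (t\<^sup>2 / 2)" 3] by blast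
  moreover have "exp u / fact 3 * (- (t\<^sup>2 / 2)) ^ 3 \<le> 0"
    by (intro mult_nonneg_nonpos) (simp_all add: power_minus_odd)
  moreover have "(\<Sum>m<3. (- (t\<^sup>2 / 2)) ^ m / fact m) = 1 - t\<^sup>2 / 2 + t ^ 4 / 8"
    by (simp add: numeral_3_eq_3 power2_eq_square power4_eq_xxxx)
  ultimately have "exp (- (t\<^sup>2 / 2)) \<le> 1 - t\<^sup>2 / 2 + t ^ 4 / 8"
    by linarith
  then show ?thesis
    by (simp add: phi_eq_std_normal_density std_normal_density_def divide_right_mono)
qed

text \<open>Integrating the quartic majorant of phi over [-1, 0] gives
  Phi(0) - Phi(-1) \<le> 103 / (120 sqrt(2 pi)) < 3/8.\<close>
lemma Phi_minus_1_ge: "1 / 8 \<le> Phi (- 1)"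
proof -
  define p where "p t = (1 - t\<^sup>2 / 2 + t ^ 4 / 8) / sqrt (2 * pi)" for t :: real
  define F where "F t = (t - t ^ 3 / 6 + t ^ 5 / 40) / sqrt (2 * pi)" for t :: real
  have p_nonneg: "0 \<le> p t" for t
  proof -
    have "1 - t\<^sup>2 / 2 + t ^ 4 / 8 = (1 - t\<^sup>2 / 4)\<^sup>2 + t ^ 4 / 16"
      by (simp add: power2_eq_square field_simps) (simp add: power4_eq_xxxx algebra_simps)
    then show ?thesis by (simp add: p_def)
  qed
  have [measurable]: "p \<in> borel_measurable borel"
    unfolding p_def[abs_def] by measurable
  have "DERIV F x :> p x" for x
    unfolding F_def[abs_def] p_def
    by (rule DERIV_cdivide, (rule derivative_eq_intros refl | simp add: field_simps eval_nat_numeral)+)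
  then have hb: "has_bochner_integral lborel (\<lambda>x. p x * indicator {- 1 .. 0} x) (F 0 - F (- 1))"
    by (intro has_bochner_integral_FTC_Icc_nonneg) (auto simp: p_nonneg)
  have "Phi 0 - Phi (- 1) = (\<integral>t. indicator {- 1<..0} t * phi t \<partial>lborel)"
    by (subst Phi_diff_eq_integral) auto
  also have "\<dots> \<le> (\<integral>t. p t * indicator {- 1 .. 0} t \<partial>lborel)"
    by (intro integral_mono integrable_indicator_mult_phi integrable.intros[OF hb])
       (auto simp: indicator_def phi_le_quartic p_def p_nonneg)
  also have "\<dots> = (103 / 120) / sqrt (2 * pi)"
    using hb by (simp add: has_bochner_integral_integral_eq F_def field_simps)
  also have "\<dots> \<le> 3 / 8"
  proof -
    have "23 / 10 \<le> sqrt (2 * pi)"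
      using pi_gt3 by (intro real_le_rsqrt) (simp add: power2_eq_square)
    then show ?thesis by (simp add: divide_simps)
  qed
  finally show ?thesis by (simp add: Phi_0)
qed

section \<open>The kernel tail and Gaussian smoothing\<close>

definition abs_normal_cdf :: "real \<Rightarrow> real \<Rightarrow> real" where
  "abs_normal_cdf b w = (if 0 < w then (if b = 0 then 1 else Phi (w / b) - Phi (- w / b)) else 0)"

lemma borel_measurable_abs_normal_cdf [measurable]: "abs_normal_cdf b \<in> borel_measurable borel"
  unfolding abs_normal_cdf_def by measurable

lemma abs_normal_cdf_eq: "b > 0 \<Longrightarrow> w \<ge> 0 \<Longrightarrow> abs_normal_cdf b w = 2 * Phi (w / b) - 1"
  using Phi_minus[of "w / b"] by (auto simp: abs_normal_cdf_def Phi_0)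

lemma abs_normal_cdf_nonneg: "b \<ge> 0 \<Longrightarrow> 0 \<le> abs_normal_cdf b w"
  by (auto simp: abs_normal_cdf_def intro!: Phi_mono)

lemma abs_normal_cdf_le_1: "abs_normal_cdf b w \<le> 1"
  using Phi_le_1[of "w / b"] Phi_nonneg[of "- w / b"] by (auto simp: abs_normal_cdf_def)

lemma integrable_abs_normal_cdf:
  assumes "finite_measure M" and sets_M: "sets M = sets borel" and b: "b \<ge> 0"
  shows "integrable M (abs_normal_cdf b)"
proof -
  interpret finite_measure M by fact
  show ?thesis
    using b by (intro integrable_const_bound[where B=1])
       (auto simp: abs_normal_cdf_le_1 abs_normal_cdf_nonneg measurable_cong_sets[OF sets_M refl])
qed

lemma ennreal_abs_normal_cdf_eq:
  assumes b: "b \<ge> 0"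
  shows "ennreal (abs_normal_cdf b w) = (\<integral>\<^sup>+z. ennreal (indicator {z. b * \<bar>z\<bar> < w} z * phi z) \<partial>lborel)"
proof -
  consider "w \<le> 0" | "0 < w" "b = 0" | "0 < w" "b > 0"
    using b by linarith
  then show ?thesis
  proof cases
    case 1
    then have "{z. b * \<bar>z\<bar> < w} = {}"
      using b by (auto simp: not_less intro: order.trans[OF 1])
    then show ?thesis using 1 by (simp add: abs_normal_cdf_def)
  next
    case 2
    then show ?thesis
      by (subst nn_integral_eq_integral) (auto simp: abs_normal_cdf_def integral_phi)
  next
    case 3
    have "AE z in lborel. indicator {z. b * \<bar>z\<bar> < w} z * phi z = indicator {- w / b<..w / b} z * phi z"
      using AE_lborel_singleton[of "w / b"]
    proof eventually_elim
      case (elim z)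
      have "(b * \<bar>z\<bar> < w) = (\<bar>z\<bar> < w / b)"
        using 3 by (simp add: pos_less_divide_eq mult.commute)
      then show ?case using elim by (auto simp: indicator_def abs_less_iff)
    qed
    then have "(\<integral>z. indicator {z. b * \<bar>z\<bar> < w} z * phi z \<partial>lborel) = Phi (w / b) - Phi (- w / b)"
      using 3 by (subst Phi_diff_eq_integral) (auto intro: integral_cong_AE simp: field_simps)
    then show ?thesis
      using 3 by (subst nn_integral_eq_integral) (auto simp: abs_normal_cdf_def)
  qed
qed

text \<open>For a = tau(w) + gamma c and s = sigma sqrt gamma, Q(w, (r, \<infinity>)) = kernel_tail s a r:
  a rejected proposal moves to a - 2 s g, and the rejection probability turns the Gaussian
  weight of g into the difference of phi(g) and phi(g - a / s).\<close>
definition kernel_tail :: "real \<Rightarrow> real \<Rightarrow> real \<Rightarrow> real" where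
  "kernel_tail s a r = Phi ((a - r) / (2 * s)) - Phi ((- a - r) / (2 * s))"

lemma kernel_tail_nonneg: "s > 0 \<Longrightarrow> a \<ge> 0 \<Longrightarrow> 0 \<le> kernel_tail s a r"
  unfolding kernel_tail_def by (auto intro!: Phi_mono divide_right_mono)

lemma pbar_eq_min_exp:
  assumes "\<sigma> > 0" "\<gamma> > 0"
  shows "pbar \<sigma> \<gamma> a g = min 1 (exp (a * g / (\<sigma> * sqrt \<gamma>) - a\<^sup>2 / (2 * (\<sigma> * sqrt \<gamma>)\<^sup>2)))"
proof -
  define s where "s = \<sigma> * sqrt \<gamma>"
  have s: "s > 0" using assms by (simp add: s_def)
  have "phi_var (s\<^sup>2) (a - s * g) / phi_var (s\<^sup>2) (s * g)
      = exp (- ((a - s * g)\<^sup>2) / (2 * s\<^sup>2)) / exp (- ((s * g)\<^sup>2) / (2 * s\<^sup>2))"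
    using s by (simp add: phi_var_def)
  also have "\<dots> = exp (- ((a - s * g)\<^sup>2) / (2 * s\<^sup>2) - (- ((s * g)\<^sup>2) / (2 * s\<^sup>2)))"
    by (rule exp_diff[symmetric])
  also have "- ((a - s * g)\<^sup>2) / (2 * s\<^sup>2) - (- ((s * g)\<^sup>2) / (2 * s\<^sup>2)) = a * g / s - a\<^sup>2 / (2 * s\<^sup>2)"
    using s by (simp add: field_simps power2_eq_square)
  finally show ?thesis
    using assms by (simp add: pbar_def s_def power_mult_distrib mult.assoc)
qed

lemma phi_mult_exp: "s > 0 \<Longrightarrow> phi g * exp (a * g / s - a\<^sup>2 / (2 * s\<^sup>2)) = phi (g - a / s)"
  by (simp add: phi_def phi_var_def field_simps power2_eq_square flip: exp_add)

lemma Qker_integrand_greaterThan: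
  assumes "\<sigma> > 0" "\<gamma> > 0" "a \<ge> 0" "r \<ge> 0"
  defines "s \<equiv> \<sigma> * sqrt \<gamma>"
  shows "indicator {r<..} (a - 2 * \<sigma> * sqrt \<gamma> * g) * (1 - pbar \<sigma> \<gamma> a g) * phi g
       = indicator {g. (2 * s) * g < a - r} g * (phi g - phi (g - a / s))"
proof (cases "2 * s * g < a - r")
  case True
  have s: "s > 0" using assms by (simp add: s_def)
  have "a * (2 * s * g) \<le> a * a"
    using True assms by (intro mult_left_mono) auto
  then have "a * g / s - a\<^sup>2 / (2 * s\<^sup>2) \<le> 0"
    using s by (simp add: field_simps power2_eq_square)
  then have "(1 - pbar \<sigma> \<gamma> a g) * phi g = phi g - phi (g - a / s)"
    using pbar_eq_min_exp[OF assms(1,2), of a g] phi_mult_exp[OF s, of g a]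
    by (simp add: s_def[symmetric] algebra_simps)
  then show ?thesis
    using True by (simp add: s_def mult.assoc)
qed (auto simp: s_def indicator_def)

lemma Qker_greaterThan:
  assumes "\<sigma> > 0" "\<gamma> > 0" "\<tau> w + \<gamma> * c \<ge> 0" "r \<ge> 0"
  shows "Qker \<sigma> \<gamma> c \<tau> w {r<..} = kernel_tail (\<sigma> * sqrt \<gamma>) (\<tau> w + \<gamma> * c) r"
proof -
  define s where "s = \<sigma> * sqrt \<gamma>"
  define a where "a = \<tau> w + \<gamma> * c"
  have s: "s > 0" and s2: "2 * s > 0" using assms by (simp_all add: s_def)
  have "Qker \<sigma> \<gamma> c \<tau> w {r<..}
      = (\<integral>g. indicator {r<..} (a - 2 * \<sigma> * sqrt \<gamma> * g) * (1 - pbar \<sigma> \<gamma> a g) * phi g \<partial>lborel)"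
    using assms(4) by (simp add: Qker_def a_def)
  also have "\<dots> = (\<integral>g. indicator {g. (2 * s) * g < a - r} g * phi (g - 0)
      - indicator {g. (2 * s) * g < a - r} g * phi (g - a / s) \<partial>lborel)"
    using Qker_integrand_greaterThan[OF assms(1,2) _ assms(4)] assms(3)
    by (simp add: a_def s_def right_diff_distrib)
  also have "\<dots> = Phi ((a - r) / (2 * s) - 0) - Phi ((a - r) / (2 * s) - a / s)"
    using Phi_shift[OF s2, of "a - r" 0] Phi_shift[OF s2, of "a - r" "a / s"]
    by (subst Bochner_Integration.integral_diff) auto
  also have "(a - r) / (2 * s) - a / s = (- a - r) / (2 * s)"
    using s by (simp add: field_simps)
  finally show ?thesis
    by (simp add: kernel_tail_def s_def a_def)
qed

lemma kernel_tail_abs: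
  assumes "s > 0"
  shows "kernel_tail s a (b * \<bar>z\<bar>) = Phi ((a + b * z) / (2 * s)) - Phi ((- a + b * z) / (2 * s))"
proof (cases "z \<ge> 0")
  case True
  have "(a - b * z) / (2 * s) = - ((- a + b * z) / (2 * s))"
    and "(- a - b * z) / (2 * s) = - ((a + b * z) / (2 * s))"
    using assms by (simp_all add: field_simps)
  then show ?thesis
    using True by (simp add: kernel_tail_def Phi_minus)
qed (simp add: kernel_tail_def)

lemma nn_integral_kernel_tail:
  assumes s: "s > 0" and a: "a \<ge> 0" and b: "b \<ge> 0"
  shows "(\<integral>\<^sup>+z. ennreal (phi z * kernel_tail s a (b * \<bar>z\<bar>)) \<partial>lborel)
       = abs_normal_cdf (sqrt (b\<^sup>2 + (2 * s)\<^sup>2)) a"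
proof -
  have int: "integrable lborel (\<lambda>z. Phi ((x + b * z) / (2 * s)) * phi z)" for x
    by (rule Bochner_Integration.integrable_bound[OF integrable_phi])
       (auto simp: Phi_nonneg Phi_le_1 intro!: mult_left_le_one_le)
  have eq: "phi z * kernel_tail s a (b * \<bar>z\<bar>)
      = Phi ((a + b * z) / (2 * s)) * phi z - Phi ((- a + b * z) / (2 * s)) * phi z" for z
    using s by (simp add: kernel_tail_abs algebra_simps)
  define b' where "b' = sqrt (b\<^sup>2 + (2 * s)\<^sup>2)"
  have "(\<integral>z. phi z * kernel_tail s a (b * \<bar>z\<bar>) \<partial>lborel) = Phi (a / b') - Phi (- a / b')"
    unfolding eq using int[of a] int[of "- a"] s
      integral_Phi_affine_mult_phi[OF _ b, of "2 * s" a] integral_Phi_affine_mult_phi[OF _ b, of "2 * s" "- a"]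
    by (subst Bochner_Integration.integral_diff) (auto simp: b'_def)
  also have "\<dots> = abs_normal_cdf b' a"
    using s a by (cases "a = 0") (auto simp: abs_normal_cdf_def b'_def add_nonneg_pos[THEN less_imp_neq, symmetric])
  finally have "(\<integral>z. phi z * kernel_tail s a (b * \<bar>z\<bar>) \<partial>lborel)
      = abs_normal_cdf (sqrt (b\<^sup>2 + (2 * s)\<^sup>2)) a"
    by (simp add: b'_def)
  moreover have "integrable lborel (\<lambda>z. phi z * kernel_tail s a (b * \<bar>z\<bar>))"
    by (simp only: eq) (intro Bochner_Integration.integrable_diff int)
  ultimately show ?thesis
    using s a by (subst nn_integral_eq_integral) (auto simp: kernel_tail_nonneg)
qed

section \<open>A drift inequality for the invariant measure\<close>

lemma nn_integral_abs_normal_cdf: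
  fixes \<mu> :: "real measure"
  assumes "sigma_finite_measure \<mu>" and sets_\<mu>: "sets \<mu> = sets borel" and b: "b \<ge> 0"
  shows "(\<integral>\<^sup>+w. abs_normal_cdf b w \<partial>\<mu>) = (\<integral>\<^sup>+z. phi z * emeasure \<mu> {b * \<bar>z\<bar><..} \<partial>lborel)"
proof -
  interpret pair_sigma_finite \<mu> lborel
    by (intro pair_sigma_finite.intro assms(1) lborel.sigma_finite_measure_axioms)
  have borel_measurable_pair: "measurable (\<mu> \<Otimes>\<^sub>M lborel) borel = measurable (lborel \<Otimes>\<^sub>M lborel) borel"
    by (rule measurable_cong_sets) (auto simp: sets_\<mu> intro!: sets_pair_measure_cong)
  have "(\<lambda>(w, z). ennreal (indicator {z. b * \<bar>z\<bar> < w} z * phi z)) \<in> borel_measurable (\<mu> \<Otimes>\<^sub>M lborel)"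
    unfolding borel_measurable_pair indicator_def by measurable
  then have "(\<integral>\<^sup>+w. abs_normal_cdf b w \<partial>\<mu>)
      = (\<integral>\<^sup>+z. (\<integral>\<^sup>+w. ennreal (indicator {z. b * \<bar>z\<bar> < w} z * phi z) \<partial>\<mu>) \<partial>lborel)"
    unfolding ennreal_abs_normal_cdf_eq[OF b] by (rule Fubini'[symmetric])
  also have "\<dots> = (\<integral>\<^sup>+z. (\<integral>\<^sup>+w. ennreal (phi z) * indicator {b * \<bar>z\<bar><..} w \<partial>\<mu>) \<partial>lborel)"
    by (intro nn_integral_cong) (auto simp: indicator_def)
  also have "\<dots> = (\<integral>\<^sup>+z. phi z * emeasure \<mu> {b * \<bar>z\<bar><..} \<partial>lborel)"
    by (subst nn_integral_cmult_indicator) (auto simp: sets_\<mu>)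
  finally show ?thesis .
qed

lemma ennreal_integral_le_nn_integral:
  "AE x in M. 0 \<le> f x \<Longrightarrow> ennreal (\<integral>x. f x \<partial>M) \<le> (\<integral>\<^sup>+x. f x \<partial>M)"
  by (cases "integrable M f") (simp_all add: nn_integral_eq_integral not_integrable_integral_eq)

lemma emeasure_greaterThan_le_kernel_tail:
  assumes \<sigma>: "\<sigma> > 0" and \<gamma>: "\<gamma> > 0" and r: "r \<ge> 0"
    and inv: "invariant_prob (Qker \<sigma> \<gamma> c T) \<mu>"
    and A_nonneg: "\<And>w. A w \<ge> 0" and A_eq: "\<And>w. w \<ge> 0 \<Longrightarrow> A w = T w + \<gamma> * c"
  shows "emeasure \<mu> {r<..} \<le> (\<integral>\<^sup>+w. kernel_tail (\<sigma> * sqrt \<gamma>) (A w) r \<partial>\<mu>)"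
proof -
  interpret prob_space \<mu>
    using inv by (simp add: invariant_prob_def)
  have "AE w in \<mu>. w \<in> {0..}"
    using inv by (intro AE_prob_1) (simp add: invariant_prob_def)
  then have AE_eq: "AE w in \<mu>. Qker \<sigma> \<gamma> c T w {r<..} = kernel_tail (\<sigma> * sqrt \<gamma>) (A w) r"
  proof eventually_elim
    case (elim w)
    then show ?case
      using Qker_greaterThan[OF \<sigma> \<gamma> _ r, of T w c] A_eq[of w] A_nonneg[of w] by simp
  qed
  have "emeasure \<mu> {r<..} = ennreal (\<integral>w. Qker \<sigma> \<gamma> c T w {r<..} \<partial>\<mu>)"
    using inv by (simp add: invariant_prob_def emeasure_eq_measure)
  also have "\<dots> \<le> (\<integral>\<^sup>+w. Qker \<sigma> \<gamma> c T w {r<..} \<partial>\<mu>)"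
    by (rule ennreal_integral_le_nn_integral)
       (use AE_eq in \<open>eventually_elim, simp add: kernel_tail_nonneg \<sigma> \<gamma> A_nonneg\<close>)
  also have "\<dots> = (\<integral>\<^sup>+w. kernel_tail (\<sigma> * sqrt \<gamma>) (A w) r \<partial>\<mu>)"
    by (rule nn_integral_cong_AE) (use AE_eq in \<open>eventually_elim, simp\<close>)
  finally show ?thesis .
qed

lemma invariant_prob_nn_integral_abs_normal_cdf_le:
  assumes \<sigma>: "\<sigma> > 0" and \<gamma>: "\<gamma> > 0" and b: "b \<ge> 0"
    and inv: "invariant_prob (Qker \<sigma> \<gamma> c T) \<mu>"
    and [measurable]: "A \<in> borel_measurable borel"
    and A_nonneg: "\<And>w. A w \<ge> 0" and A_eq: "\<And>w. w \<ge> 0 \<Longrightarrow> A w = T w + \<gamma> * c"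
  shows "(\<integral>\<^sup>+w. abs_normal_cdf b w \<partial>\<mu>)
      \<le> (\<integral>\<^sup>+w. abs_normal_cdf (sqrt (b\<^sup>2 + (2 * (\<sigma> * sqrt \<gamma>))\<^sup>2)) (A w) \<partial>\<mu>)"
proof -
  define s where "s = \<sigma> * sqrt \<gamma>"
  have s: "s > 0" using \<sigma> \<gamma> by (simp add: s_def)
  have sets_\<mu>: "sets \<mu> = sets borel" and "prob_space \<mu>"
    using inv by (auto simp: invariant_prob_def)
  interpret pair_sigma_finite \<mu> lborel
    by (intro pair_sigma_finite.intro prob_space_imp_sigma_finite \<open>prob_space \<mu>\<close>
        lborel.sigma_finite_measure_axioms)
  have borel_measurable_\<mu>: "borel_measurable \<mu> = borel_measurable borel"
    by (rule measurable_cong_sets) (simp_all add: sets_\<mu>)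
  have tail_measurable: "(\<lambda>w. ennreal (kernel_tail s (A w) r)) \<in> borel_measurable \<mu>" for r
    unfolding borel_measurable_\<mu> kernel_tail_def by measurable
  have tail_measurable_pair:
    "(\<lambda>(w, z). ennreal (phi z * kernel_tail s (A w) (b * \<bar>z\<bar>))) \<in> borel_measurable (\<mu> \<Otimes>\<^sub>M lborel)"
  proof -
    have borel_measurable_pair: "measurable (\<mu> \<Otimes>\<^sub>M lborel) borel = measurable (lborel \<Otimes>\<^sub>M lborel) borel"
      by (rule measurable_cong_sets) (auto simp: sets_\<mu> intro!: sets_pair_measure_cong)
    show ?thesis
      unfolding borel_measurable_pair kernel_tail_def by measurable
  qed
  have "(\<integral>\<^sup>+w. abs_normal_cdf b w \<partial>\<mu>) = (\<integral>\<^sup>+z. phi z * emeasure \<mu> {b * \<bar>z\<bar><..} \<partial>lborel)"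
    by (rule nn_integral_abs_normal_cdf)
       (use b sets_\<mu> prob_space_imp_sigma_finite[OF \<open>prob_space \<mu>\<close>] in auto)
  also have "\<dots> \<le> (\<integral>\<^sup>+z. phi z * (\<integral>\<^sup>+w. kernel_tail s (A w) (b * \<bar>z\<bar>) \<partial>\<mu>) \<partial>lborel)"
    unfolding s_def using b
    by (intro nn_integral_mono mult_left_mono emeasure_greaterThan_le_kernel_tail[OF \<sigma> \<gamma> _ inv A_nonneg A_eq]) simp_all
  also have "\<dots> = (\<integral>\<^sup>+z. (\<integral>\<^sup>+w. ennreal (phi z * kernel_tail s (A w) (b * \<bar>z\<bar>)) \<partial>\<mu>) \<partial>lborel)"
    by (intro nn_integral_cong) (simp add: nn_integral_cmult[symmetric, OF tail_measurable] ennreal_mult')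
  also have "\<dots> = (\<integral>\<^sup>+w. (\<integral>\<^sup>+z. ennreal (phi z * kernel_tail s (A w) (b * \<bar>z\<bar>)) \<partial>lborel) \<partial>\<mu>)"
    using tail_measurable_pair by (rule Fubini')
  also have "\<dots> = (\<integral>\<^sup>+w. abs_normal_cdf (sqrt (b\<^sup>2 + (2 * s)\<^sup>2)) (A w) \<partial>\<mu>)"
    by (intro nn_integral_cong) (simp add: nn_integral_kernel_tail s A_nonneg b)
  finally show ?thesis by (simp add: s_def)
qed

lemma abs_normal_cdf_le_affine:
  assumes b: "b > 0" and q: "q > 0" and w: "w \<ge> 0" and e: "e \<ge> 0"
    and a: "0 \<le> a" "a \<le> q * w + e"
  shows "abs_normal_cdf b a \<le> abs_normal_cdf (b / q) w + 2 * e / (b * sqrt (2 * pi))"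
proof -
  have "Phi (a / b) \<le> Phi ((q * w + e) / b)"
    using a b by (intro Phi_mono divide_right_mono) auto
  also have "\<dots> \<le> Phi (q * w / b) + ((q * w + e) / b - q * w / b) / sqrt (2 * pi)"
    using Phi_diff_le[of "q * w / b" "(q * w + e) / b"] b e by (simp add: divide_right_mono)
  also have "(q * w + e) / b - q * w / b = e / b"
    by (simp add: add_divide_distrib)
  finally show ?thesis
    using a b q w by (simp add: abs_normal_cdf_eq field_simps)
qed

lemma borel_measurable_mono_on_max_0:
  fixes T :: "real \<Rightarrow> real"
  shows "mono_on {0..} T \<Longrightarrow> (\<lambda>w. T (max 0 w)) \<in> borel_measurable borel"
  by (intro borel_measurable_mono monoI mono_onD[of "{0..}" T]) auto

lemma nn_integral_abs_normal_cdf_drift: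
  assumes \<sigma>: "\<sigma> > 0" and \<gamma>: "\<gamma> > 0" and c: "c \<ge> 0" and q: "q > 0" and b: "b \<ge> 0"
    and inv: "invariant_prob (Qker \<sigma> \<gamma> c T) \<mu>"
    and T_mono: "mono_on {0..} T" and T_nonneg: "\<And>w. w \<ge> 0 \<Longrightarrow> 0 \<le> T w"
    and T_le: "\<And>w. w \<ge> 0 \<Longrightarrow> T w \<le> q * w"
  defines "b' \<equiv> sqrt (b\<^sup>2 + (2 * (\<sigma> * sqrt \<gamma>))\<^sup>2)"
  shows "(\<integral>\<^sup>+w. abs_normal_cdf b w \<partial>\<mu>)
      \<le> (\<integral>\<^sup>+w. abs_normal_cdf (b' / q) w + 2 * (\<gamma> * c) / (b' * sqrt (2 * pi)) \<partial>\<mu>)"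
proof -
  interpret prob_space \<mu>
    using inv by (simp add: invariant_prob_def)
  have b': "b' > 0"
    using \<sigma> \<gamma> by (simp add: b'_def add_nonneg_pos)
  define A where "A w = T (max 0 w) + \<gamma> * c" for w
  have A_measurable: "A \<in> borel_measurable borel"
    unfolding A_def[abs_def] using borel_measurable_mono_on_max_0[OF T_mono] by simp
  have A_nonneg: "A w \<ge> 0" for w
    using T_nonneg[of "max 0 w"] \<gamma> c by (simp add: A_def)
  have "(\<integral>\<^sup>+w. abs_normal_cdf b w \<partial>\<mu>) \<le> (\<integral>\<^sup>+w. abs_normal_cdf b' (A w) \<partial>\<mu>)"
    unfolding b'_def
    by (rule invariant_prob_nn_integral_abs_normal_cdf_le[OF \<sigma> \<gamma> b inv A_measurable A_nonneg])
       (simp add: A_def)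
  also have "\<dots> \<le> (\<integral>\<^sup>+w. abs_normal_cdf (b' / q) w + 2 * (\<gamma> * c) / (b' * sqrt (2 * pi)) \<partial>\<mu>)"
  proof (rule nn_integral_mono_AE)
    have "AE w in \<mu>. w \<in> {0..}"
      using inv by (intro AE_prob_1) (simp add: invariant_prob_def)
    then show "AE w in \<mu>. ennreal (abs_normal_cdf b' (A w))
        \<le> ennreal (abs_normal_cdf (b' / q) w + 2 * (\<gamma> * c) / (b' * sqrt (2 * pi)))"
    proof eventually_elim
      case (elim w)
      then have "A w \<le> q * w + \<gamma> * c"
        using T_le[of w] by (simp add: A_def)
      then show ?case
        using elim \<gamma> c by (intro ennreal_leI abs_normal_cdf_le_affine[OF b' q]) (simp_all add: A_nonneg)
    qed
  qed
  finally show ?thesis .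
qed

lemma integral_abs_normal_cdf_drift:
  assumes \<sigma>: "\<sigma> > 0" and \<gamma>: "\<gamma> > 0" and c: "c \<ge> 0" and q: "q > 0" and b: "b \<ge> 0"
    and inv: "invariant_prob (Qker \<sigma> \<gamma> c T) \<mu>"
    and T_mono: "mono_on {0..} T" and T_nonneg: "\<And>w. w \<ge> 0 \<Longrightarrow> 0 \<le> T w"
    and T_le: "\<And>w. w \<ge> 0 \<Longrightarrow> T w \<le> q * w"
  defines "b' \<equiv> sqrt (b\<^sup>2 + (2 * (\<sigma> * sqrt \<gamma>))\<^sup>2)"
  shows "(\<integral>w. abs_normal_cdf b w \<partial>\<mu>)
      \<le> (\<integral>w. abs_normal_cdf (b' / q) w \<partial>\<mu>) + 2 * (\<gamma> * c) / (b' * sqrt (2 * pi))"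
proof -
  interpret prob_space \<mu>
    using inv by (simp add: invariant_prob_def)
  have sets_\<mu>: "sets \<mu> = sets borel"
    using inv by (simp add: invariant_prob_def)
  have b': "b' > 0"
    using \<sigma> \<gamma> by (simp add: b'_def add_nonneg_pos)
  have integrable: "integrable \<mu> (abs_normal_cdf x)" if "x \<ge> 0" for x
    by (rule integrable_abs_normal_cdf[OF finite_measure_axioms sets_\<mu> that])
  have "ennreal (\<integral>w. abs_normal_cdf b w \<partial>\<mu>) = (\<integral>\<^sup>+w. abs_normal_cdf b w \<partial>\<mu>)"
    using b integrable by (simp add: nn_integral_eq_integral abs_normal_cdf_nonneg)
  also have "\<dots> \<le> (\<integral>\<^sup>+w. abs_normal_cdf (b' / q) w + 2 * (\<gamma> * c) / (b' * sqrt (2 * pi)) \<partial>\<mu>)"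
    unfolding b'_def by (rule nn_integral_abs_normal_cdf_drift[OF \<sigma> \<gamma> c q b inv T_mono T_nonneg T_le])
  also have "\<dots> = ennreal ((\<integral>w. abs_normal_cdf (b' / q) w \<partial>\<mu>) + 2 * (\<gamma> * c) / (b' * sqrt (2 * pi)))"
    using b' q \<gamma> c integrable
    by (subst nn_integral_eq_integral) (auto simp: abs_normal_cdf_nonneg prob_space)
  finally show ?thesis
    using b' q \<gamma> c
    by (subst (asm) ennreal_le_iff) (auto intro!: add_nonneg_nonneg integral_nonneg_AE abs_normal_cdf_nonneg)
qed

section \<open>Iterating the drift inequality\<close>

fun scale_seq :: "real \<Rightarrow> real \<Rightarrow> nat \<Rightarrow> real" where
  "scale_seq v q 0 = 0"
| "scale_seq v q (Suc k) = sqrt ((scale_seq v q k)\<^sup>2 + v) / q"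

lemma scale_seq_nonneg: "v \<ge> 0 \<Longrightarrow> q > 0 \<Longrightarrow> scale_seq v q k \<ge> 0"
  by (induction k) auto

lemma sq_scale_seq_ge:
  assumes v: "v > 0" and q: "q \<ge> 1"
  shows "v * real k / q ^ (2 * k) \<le> (scale_seq v q k)\<^sup>2"
proof (induction k)
  case (Suc k)
  have "v / q ^ (2 * k) \<le> v"
    using v q by (simp add: divide_le_eq one_le_power)
  then have "v * real (Suc k) / q ^ (2 * k) \<le> (scale_seq v q k)\<^sup>2 + v"
    using Suc by (simp add: add_divide_distrib distrib_left)
  then have "v * real (Suc k) / q ^ (2 * k) / q\<^sup>2 \<le> ((scale_seq v q k)\<^sup>2 + v) / q\<^sup>2"
    using q by (intro divide_right_mono) auto
  then show ?case
    using v q by (simp add: power_divide power_add power2_eq_square mult_ac)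
qed simp

lemma sqrt_div_power_le_scale_seq:
  assumes v: "v > 0" and q: "q \<ge> 1"
  shows "sqrt (v * n) / q ^ n \<le> scale_seq v q n"
proof (rule power2_le_imp_le)
  show "(sqrt (v * n) / q ^ n)\<^sup>2 \<le> (scale_seq v q n)\<^sup>2"
    using sq_scale_seq_ge[OF v q, of n] v by (simp add: power_divide power_mult[symmetric] mult.commute)
  show "0 \<le> scale_seq v q n"
    using scale_seq_nonneg[of v q n] v q by simp
qed

lemma inverse_sqrt_scale_seq_le:
  assumes v: "v > 0" and q: "q \<ge> 1"
  shows "1 / sqrt ((scale_seq v q k)\<^sup>2 + v) \<le> q ^ k / sqrt (v * (real k + 1))"
proof -
  have "v / q ^ (2 * k) \<le> v"
    using v q by (simp add: divide_le_eq one_le_power)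
  then have "v * (real k + 1) / (q ^ k)\<^sup>2 \<le> (scale_seq v q k)\<^sup>2 + v"
    using sq_scale_seq_ge[OF v q, of k]
    by (simp add: add_divide_distrib distrib_left power_mult[symmetric] mult.commute)
  then have "sqrt (v * (real k + 1)) / q ^ k \<le> sqrt ((scale_seq v q k)\<^sup>2 + v)"
    using v q by (intro real_le_rsqrt) (simp add: power_divide)
  then have "1 / sqrt ((scale_seq v q k)\<^sup>2 + v) \<le> 1 / (sqrt (v * (real k + 1)) / q ^ k)"
    using v q by (intro divide_left_mono mult_pos_pos) (auto intro: add_nonneg_pos)
  then show ?thesis
    by simp
qed

lemma sum_inverse_sqrt_le: "(\<Sum>k<n. 1 / sqrt (real k + 1)) \<le> 2 * sqrt (real n)"
proof (induction n)
  case (Suc n)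
  have "2 * sqrt (real n) * sqrt (real n + 1) \<le> real n + (real n + 1)"
    using sum_squares_bound[of "sqrt (real n)" "sqrt (real n + 1)"] by simp
  then have "1 / sqrt (real n + 1) \<le> 2 * sqrt (real n + 1) - 2 * sqrt (real n)"
    by (simp add: field_simps)
  then show ?case
    using Suc by (simp add: add.commute)
qed simp

lemma telescope_scale_seq:
  fixes I C :: "real \<Rightarrow> real"
  assumes v: "v \<ge> 0" and q: "q > 0"
    and step: "\<And>b. b \<ge> 0 \<Longrightarrow> I b \<le> I (sqrt (b\<^sup>2 + v) / q) + C (sqrt (b\<^sup>2 + v))"
  shows "I 0 \<le> I (scale_seq v q n) + (\<Sum>k<n. C (sqrt ((scale_seq v q k)\<^sup>2 + v)))"
proof (induction n)
  case (Suc n)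
  then show ?case
    using step[OF scale_seq_nonneg[OF v q, of n]] by simp
qed simp

text \<open>Since b_k^2 \<ge> k v / q^(2 k), the n error terms e / b_k sum to O(sqrt n) rather than O(n).\<close>
lemma iterate_scale_seq_bound:
  fixes I :: "real \<Rightarrow> real"
  assumes v: "v > 0" and q: "q \<ge> 1" and e: "e \<ge> 0"
    and step: "\<And>b. b \<ge> 0 \<Longrightarrow> I b \<le> I (sqrt (b\<^sup>2 + v) / q) + e / sqrt (b\<^sup>2 + v)"
  shows "I 0 \<le> I (scale_seq v q n) + 2 * e * sqrt (real n) * q ^ n / sqrt v"
proof -
  have "I 0 \<le> I (scale_seq v q n) + (\<Sum>k<n. e / sqrt ((scale_seq v q k)\<^sup>2 + v))"
    using v q step by (intro telescope_scale_seq[where C="\<lambda>x. e / x"]) auto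
  also have "(\<Sum>k<n. e / sqrt ((scale_seq v q k)\<^sup>2 + v))
      \<le> (\<Sum>k<n. e * q ^ n / sqrt v * (1 / sqrt (real k + 1)))"
  proof (intro sum_mono)
    fix k assume "k \<in> {..<n}"
    then have "q ^ k \<le> q ^ n"
      using q by (intro power_increasing) auto
    then have "1 / sqrt ((scale_seq v q k)\<^sup>2 + v) \<le> q ^ n / sqrt (v * (real k + 1))"
      using v by (intro order.trans[OF inverse_sqrt_scale_seq_le[OF v q] divide_right_mono]) auto
    then have "e * (1 / sqrt ((scale_seq v q k)\<^sup>2 + v)) \<le> e * (q ^ n / sqrt (v * (real k + 1)))"
      using e by (rule mult_left_mono)
    then show "e / sqrt ((scale_seq v q k)\<^sup>2 + v) \<le> e * q ^ n / sqrt v * (1 / sqrt (real k + 1))"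
      by (simp add: real_sqrt_mult)
  qed
  also have "\<dots> = e * q ^ n / sqrt v * (\<Sum>k<n. 1 / sqrt (real k + 1))"
    by (simp add: sum_distrib_left)
  also have "\<dots> \<le> e * q ^ n / sqrt v * (2 * sqrt (real n))"
    using v q e by (intro mult_left_mono sum_inverse_sqrt_le) auto
  finally show ?thesis
    by (simp add: mult.commute mult.left_commute)
qed

lemma measure_Ioo_le_integral_abs_normal_cdf_diff:
  assumes "prob_space \<mu>" and sets_\<mu>: "sets \<mu> = sets borel" and b: "b > 0"
  shows "2 * Phi (- (R / b)) * measure \<mu> {0<..<R}
      \<le> (\<integral>w. abs_normal_cdf 0 w \<partial>\<mu>) - (\<integral>w. abs_normal_cdf b w \<partial>\<mu>)"
proof -
  interpret prob_space \<mu> by fact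
  have integrable: "integrable \<mu> (abs_normal_cdf x)" if "x \<ge> 0" for x
    by (rule integrable_abs_normal_cdf[OF finite_measure_axioms sets_\<mu> that])
  have pointwise: "indicator {0<..<R} w * (2 * Phi (- (R / b))) \<le> abs_normal_cdf 0 w - abs_normal_cdf b w" for w
  proof (cases "w > 0")
    case True
    then have "abs_normal_cdf 0 w - abs_normal_cdf b w = 2 * Phi (- (w / b))"
      using b by (simp add: abs_normal_cdf_eq Phi_minus abs_normal_cdf_def[of 0])
    moreover have "Phi (- (R / b)) \<le> Phi (- (w / b))" if "w < R"
      using b less_imp_le[OF that] by (intro Phi_mono) (simp add: divide_right_mono)
    ultimately show ?thesis
      using True Phi_nonneg[of "- (w / b)"] by (auto simp: indicator_def)
  qed (simp add: abs_normal_cdf_def)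
  have "2 * Phi (- (R / b)) * measure \<mu> {0<..<R} = (\<integral>w. indicator {0<..<R} w * (2 * Phi (- (R / b))) \<partial>\<mu>)"
    using sets_\<mu> by simp
  also have "\<dots> \<le> (\<integral>w. abs_normal_cdf 0 w - abs_normal_cdf b w \<partial>\<mu>)"
    using b sets_\<mu> pointwise
    by (intro integral_mono integrable_mult_left integrable_real_indicator
        Bochner_Integration.integrable_diff integrable) (auto simp: less_top[symmetric])
  also have "\<dots> = (\<integral>w. abs_normal_cdf 0 w \<partial>\<mu>) - (\<integral>w. abs_normal_cdf b w \<partial>\<mu>)"
    using b by (intro Bochner_Integration.integral_diff integrable) auto
  finally show ?thesis .
qed

lemma integral_abs_normal_cdf_iterate:
  fixes \<sigma> \<gamma> c L :: real and T :: "real \<Rightarrow> real" and \<mu> :: "real measure" and n :: nat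
  assumes \<sigma>: "\<sigma> > 0" and \<gamma>: "\<gamma> > 0" and c: "c \<ge> 0" and L: "L \<ge> 0"
    and inv: "invariant_prob (Qker \<sigma> \<gamma> c T) \<mu>"
    and T_mono: "mono_on {0..} T" and T_nonneg: "\<And>w. w \<ge> 0 \<Longrightarrow> 0 \<le> T w"
    and T_le: "\<And>w. w \<ge> 0 \<Longrightarrow> T w \<le> (1 + \<gamma> * L) * w"
  defines "q \<equiv> 1 + \<gamma> * L" and "v \<equiv> (2 * (\<sigma> * sqrt \<gamma>))\<^sup>2"
  shows "(\<integral>w. abs_normal_cdf 0 w \<partial>\<mu>) \<le> (\<integral>w. abs_normal_cdf (scale_seq v q n) w \<partial>\<mu>)
      + 2 * (sqrt (n * \<gamma>) * q ^ n / (\<sigma> * sqrt (2 * pi)) * c)"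
proof -
  define e where "e = 2 * (\<gamma> * c) / sqrt (2 * pi)"
  define I where "I b = (\<integral>w. abs_normal_cdf b w \<partial>\<mu>)" for b
  have q: "q \<ge> 1" and v: "v > 0" and e: "e \<ge> 0"
    using \<sigma> \<gamma> c L by (simp_all add: q_def v_def e_def)
  have "I 0 \<le> I (scale_seq v q n) + 2 * e * sqrt n * q ^ n / sqrt v"
  proof (rule iterate_scale_seq_bound[OF v q e])
    fix b :: real
    assume "b \<ge> 0"
    with integral_abs_normal_cdf_drift[OF \<sigma> \<gamma> c _ _ inv T_mono T_nonneg, of q b] T_le q
    show "I b \<le> I (sqrt (b\<^sup>2 + v) / q) + e / sqrt (b\<^sup>2 + v)"
      by (simp add: I_def v_def e_def q_def ac_simps)
  qed
  also have "2 * e * sqrt n * q ^ n / sqrt v = 2 * (sqrt (n * \<gamma>) * q ^ n / (\<sigma> * sqrt (2 * pi)) * c)"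
    using \<sigma> \<gamma> by (simp add: e_def v_def real_sqrt_mult field_simps)
  finally show ?thesis
    by (simp only: I_def)
qed

lemma invariant_prob_measure_Ioo_le:
  fixes \<sigma> \<gamma> c L R :: real and T :: "real \<Rightarrow> real" and \<mu> :: "real measure" and n :: nat
  assumes \<sigma>: "\<sigma> > 0" and \<gamma>: "\<gamma> > 0" and c: "c \<ge> 0" and L: "L \<ge> 0" and R: "R \<ge> 0" and n: "n > 0"
    and inv: "invariant_prob (Qker \<sigma> \<gamma> c T) \<mu>"
    and T_mono: "mono_on {0..} T" and T_nonneg: "\<And>w. w \<ge> 0 \<Longrightarrow> 0 \<le> T w"
    and T_le: "\<And>w. w \<ge> 0 \<Longrightarrow> T w \<le> (1 + \<gamma> * L) * w"
  shows "measure \<mu> {0<..<R} \<le> sqrt (n * \<gamma>) * (1 + \<gamma> * L) ^ n / (\<sigma> * sqrt (2 * pi))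
      / Phi (- (R * (1 + \<gamma> * L) ^ n / (2 * \<sigma> * sqrt (n * \<gamma>)))) * c"
proof -
  define q where "q = 1 + \<gamma> * L"
  define v where "v = (2 * (\<sigma> * sqrt \<gamma>))\<^sup>2"
  define I where "I b = (\<integral>w. abs_normal_cdf b w \<partial>\<mu>)" for b
  define b where "b = scale_seq v q n"
  define Y where "Y = R * q ^ n / (2 * \<sigma> * sqrt (n * \<gamma>))"
  have q: "q \<ge> 1" and v: "v > 0"
    using \<sigma> \<gamma> L by (simp_all add: q_def v_def)
  have "I 0 \<le> I b + 2 * (sqrt (n * \<gamma>) * q ^ n / (\<sigma> * sqrt (2 * pi)) * c)"
    unfolding I_def b_def q_def v_def
    by (rule integral_abs_normal_cdf_iterate[OF \<sigma> \<gamma> c L inv T_mono T_nonneg T_le])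
  moreover have "2 * (Phi (- Y) * measure \<mu> {0<..<R}) \<le> I 0 - I b"
  proof -
    have lb: "sqrt (v * n) / q ^ n \<le> b"
      unfolding b_def by (rule sqrt_div_power_le_scale_seq[OF v q])
    have lb_pos: "0 < sqrt (v * n) / q ^ n"
      using v q n by simp
    have "sqrt (v * n) = 2 * \<sigma> * sqrt (n * \<gamma>)"
      using \<sigma> \<gamma> by (simp add: v_def real_sqrt_mult)
    then have "Y = R / (sqrt (v * n) / q ^ n)"
      by (simp add: Y_def)
    moreover have "R / b \<le> R / (sqrt (v * n) / q ^ n)"
      using R lb lb_pos by (intro divide_left_mono mult_pos_pos) auto
    ultimately have "Phi (- Y) \<le> Phi (- (R / b))"
      by (intro Phi_mono) simp
    then have "2 * Phi (- Y) * measure \<mu> {0<..<R} \<le> 2 * Phi (- (R / b)) * measure \<mu> {0<..<R}"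
      by (simp add: mult_right_mono)
    also have "\<dots> \<le> I 0 - I b"
      unfolding I_def using inv lb lb_pos
      by (intro measure_Ioo_le_integral_abs_normal_cdf_diff) (auto simp: invariant_prob_def)
    finally show ?thesis
      by (simp only: mult.assoc)
  qed
  ultimately have "Phi (- Y) * measure \<mu> {0<..<R} \<le> sqrt (n * \<gamma>) * q ^ n / (\<sigma> * sqrt (2 * pi)) * c"
    by linarith
  then have "measure \<mu> {0<..<R} \<le> sqrt (n * \<gamma>) * q ^ n / (\<sigma> * sqrt (2 * pi)) * c / Phi (- Y)"
    by (simp only: pos_le_divide_eq[OF Phi_pos] mult.commute)
  then show ?thesis
    by (simp add: Y_def q_def)
qed

lemma exists_nat_mult_between:
  fixes \<delta> \<gamma> :: real
  assumes \<delta>: "\<delta> > 0" and \<gamma>: "\<gamma> > 0"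
  obtains n :: nat where "n > 0" "\<delta> \<le> n * \<gamma>" "n * \<gamma> < \<delta> + \<gamma>"
proof
  define n where "n = nat \<lceil>\<delta> / \<gamma>\<rceil>"
  have "\<delta> / \<gamma> \<le> n" "n < \<delta> / \<gamma> + 1"
    using \<delta> \<gamma> by (simp_all add: n_def) linarith
  then show "\<delta> \<le> n * \<gamma>" "n * \<gamma> < \<delta> + \<gamma>"
    using \<gamma> by (simp_all add: divide_le_eq field_simps)
  then show "n > 0"
    using \<delta> by (intro Nat.gr0I) auto
qed

lemma power_one_plus_mult_le_exp:
  fixes \<gamma> L D :: real
  assumes "\<gamma> > 0" "L \<ge> 0" "n * \<gamma> \<le> D"
  shows "(1 + \<gamma> * L) ^ n \<le> exp (D * L)"
proof -
  have "(1 + \<gamma> * L) ^ n \<le> exp (\<gamma> * L) ^ n"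
    using assms by (intro power_mono exp_ge_add_one_self) simp
  also have "\<dots> \<le> exp (D * L)"
    using assms by (simp add: exp_of_nat_mult[symmetric] mult.assoc[symmetric] mult_right_mono)
  finally show ?thesis .
qed

lemma SUP_sq_mult_Phi_minus_ge: "1 / 8 \<le> (SUP t\<in>{0..}. t\<^sup>2 * Phi (- t))"
proof -
  have "bdd_above ((\<lambda>t. t\<^sup>2 * Phi (- t)) ` {0..})"
  proof (rule bdd_aboveI2)
    fix t :: real
    assume "t \<in> {0..}"
    then show "t\<^sup>2 * Phi (- t) \<le> 1"
      by (cases "t = 0") (auto intro: sq_mult_Phi_minus_le_1)
  qed
  then have "1\<^sup>2 * Phi (- 1) \<le> (SUP t\<in>{0..}. t\<^sup>2 * Phi (- t))"
    by (rule cSUP_upper[rotated]) simp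
  then show ?thesis
    using Phi_minus_1_ge by simp
qed

lemma near_zero_bound_mono:
  fixes \<sigma> c R \<delta> x D L Q g :: real
  assumes \<sigma>: "\<sigma> > 0" and c: "c \<ge> 0" and R: "R \<ge> 0" and \<delta>: "\<delta> > 0"
    and x: "\<delta> \<le> x" "x \<le> D" and Q: "0 < Q" "Q \<le> exp (D * L)" and g: "g \<ge> 1"
  shows "sqrt x * Q / (\<sigma> * sqrt (2 * pi)) / Phi (- (R * Q / (2 * \<sigma> * sqrt x))) * c
    \<le> sqrt D * exp (D * L) / (\<sigma> * sqrt (2 * pi))
       / Phi (- ((g * R + D * c) / (2 * sqrt \<delta> * \<sigma> * exp (- D * L)))) * c"
proof -
  have D: "D \<ge> 0"
    using \<delta> x by linarith
  have "sqrt x * Q \<le> sqrt D * exp (D * L)"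
    using x Q \<delta> by (intro mult_mono) auto
  then have numerator: "sqrt x * Q / (\<sigma> * sqrt (2 * pi)) \<le> sqrt D * exp (D * L) / (\<sigma> * sqrt (2 * pi))"
    using \<sigma> by (intro divide_right_mono) auto
  have "R * Q / (2 * \<sigma> * sqrt x) \<le> R * exp (D * L) / (2 * \<sigma> * sqrt \<delta>)"
    using R Q \<sigma> \<delta> x by (intro frac_le mult_left_mono mult_pos_pos) auto
  also have "\<dots> \<le> (g * R + D * c) * exp (D * L) / (2 * \<sigma> * sqrt \<delta>)"
    using mult_right_mono[OF g R] mult_nonneg_nonneg[OF D c] \<sigma> \<delta>
    by (intro divide_right_mono mult_right_mono) auto
  also have "\<dots> = (g * R + D * c) / (2 * sqrt \<delta> * \<sigma> * exp (- D * L))"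
    by (simp add: exp_minus field_simps)
  finally have denominator: "Phi (- ((g * R + D * c) / (2 * sqrt \<delta> * \<sigma> * exp (- D * L))))
      \<le> Phi (- (R * Q / (2 * \<sigma> * sqrt x)))"
    by (intro Phi_mono) simp
  have "0 \<le> sqrt D * exp (D * L) / (\<sigma> * sqrt (2 * pi))"
    using \<sigma> D by simp
  then show ?thesis
    using c by (intro mult_right_mono frac_le[OF _ numerator Phi_pos denominator])
qed

lemma eta_coefficient_bound:
  fixes \<sigma> D L g P c :: real
  assumes \<sigma>: "\<sigma> > 0" and D: "D \<ge> 0" and L: "L \<ge> 0" and g: "g \<ge> 1" and P: "P > 0" and c: "c \<ge> 0"
  defines "\<zeta> \<equiv> 2 * g\<^sup>2 * \<sigma>\<^sup>2 / (2 * sqrt (2 * pi)) * ((SUP t\<in>{0..}. t\<^sup>2 * Phi (- t)) + 1 / 8)"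
  shows "sqrt D * exp (D * L) / (\<sigma> * sqrt (2 * pi)) / P * c
    \<le> sqrt D * (2 * \<zeta> * exp (3 * D * L) / \<sigma> ^ 3 + exp (D * L) / (2 * sqrt (2 * pi) * \<sigma>)) / P * c"
proof -
  have "\<sigma>\<^sup>2 / (4 * sqrt (2 * pi)) = 2 * 1 * \<sigma>\<^sup>2 / (2 * sqrt (2 * pi)) * (1 / 8 + 1 / 8)"
    by simp
  also have "\<dots> \<le> \<zeta>"
    unfolding \<zeta>_def using g SUP_sq_mult_Phi_minus_ge
    by (intro mult_mono divide_right_mono mult_left_mono add_right_mono) (auto simp: one_le_power)
  finally have \<zeta>: "\<sigma>\<^sup>2 / (4 * sqrt (2 * pi)) \<le> \<zeta>" .
  have "exp (D * L) / (2 * sqrt (2 * pi) * \<sigma>) = 2 * (\<sigma>\<^sup>2 / (4 * sqrt (2 * pi))) * exp (D * L) / \<sigma> ^ 3"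
    using \<sigma> by (simp add: field_simps power2_eq_square power3_eq_cube)
  also have "\<dots> \<le> 2 * \<zeta> * exp (3 * D * L) / \<sigma> ^ 3"
    using \<zeta> \<sigma> D L by (intro divide_right_mono mult_mono) (auto intro: order.trans[OF _ \<zeta>])
  moreover have "exp (D * L) / (\<sigma> * sqrt (2 * pi))
      = exp (D * L) / (2 * sqrt (2 * pi) * \<sigma>) + exp (D * L) / (2 * sqrt (2 * pi) * \<sigma>)"
    by (simp add: field_simps)
  ultimately have "exp (D * L) / (\<sigma> * sqrt (2 * pi))
      \<le> 2 * \<zeta> * exp (3 * D * L) / \<sigma> ^ 3 + exp (D * L) / (2 * sqrt (2 * pi) * \<sigma>)"
    by linarith
  then have "sqrt D * (exp (D * L) / (\<sigma> * sqrt (2 * pi)))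
      \<le> sqrt D * (2 * \<zeta> * exp (3 * D * L) / \<sigma> ^ 3 + exp (D * L) / (2 * sqrt (2 * pi) * \<sigma>))"
    by (rule mult_left_mono) (simp add: D)
  then show ?thesis
    using c P by (intro mult_right_mono divide_right_mono) simp_all
qed

theorem theorem27:
  fixes \<sigma> \<gamma>bar cinf R1 L m R \<gamma> \<delta>bar :: real
    and \<tau> :: "real \<Rightarrow> real \<Rightarrow> real"
    and \<mu> :: "real measure"
  assumes \<sigma>_pos: "\<sigma> > 0" and \<gamma>bar_pos: "\<gamma>bar > 0" and c_nonneg: "cinf \<ge> 0"
    and R1: "R1 \<ge> 0" and L: "L \<ge> 0" and m: "m > 0"
    and tau_mono: "\<And>g. g \<in> {0<..\<gamma>bar} \<Longrightarrow> mono_on {0..} (\<tau> g)"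
    and tau_range: "\<And>g r. g \<in> {0<..\<gamma>bar} \<Longrightarrow> r \<ge> 0 \<Longrightarrow> \<tau> g r \<ge> 0"
    and tau_zero: "\<And>g. g \<in> {0<..\<gamma>bar} \<Longrightarrow> \<tau> g 0 = 0"
    and tau_lip: "\<And>g r. g \<in> {0<..\<gamma>bar} \<Longrightarrow> r > 0 \<Longrightarrow> \<tau> g r / r \<le> 1 + g * L"
    and tau_contr: "\<And>g r. g \<in> {0<..\<gamma>bar} \<Longrightarrow> r > R1 \<Longrightarrow> \<tau> g r / r \<le> 1 - g * m"
    and R: "R \<ge> 0"
    and \<gamma>: "\<gamma> \<in> {0<..\<gamma>bar}"
    and inv: "invariant_prob (Qker \<sigma> \<gamma> cinf (\<tau> \<gamma>)) \<mu>"
    and uniq: "\<And>\<nu>. invariant_prob (Qker \<sigma> \<gamma> cinf (\<tau> \<gamma>)) \<nu> \<Longrightarrow> \<nu> = \<mu>"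
    and \<delta>_pos: "\<delta>bar > 0"
    and \<delta>_L: "L > 0 \<Longrightarrow> \<delta>bar \<le> 1 / L"
    and \<delta>_c: "cinf > 0 \<Longrightarrow> \<delta>bar \<le> (\<sigma> * exp (-1) / cinf)\<^sup>2"
  shows "measure \<mu> {0<..<R} \<le>
    (let \<zeta> = 2 * (1 + \<gamma>bar * L)\<^sup>2 * \<sigma>\<^sup>2 / (2 * sqrt (2 * pi))
               * ((SUP t\<in>{0..}. t\<^sup>2 * Phi (- t)) + 1 / 8);
         D = \<delta>bar + \<gamma>bar;
         \<eta> = sqrt D * (2 * \<zeta> * exp (3 * D * L) / \<sigma> ^ 3 + exp (D * L) / (2 * sqrt (2 * pi) * \<sigma>))
             / Phi (- (((1 + \<gamma>bar * L) * R + D * cinf) / (2 * sqrt \<delta>bar * \<sigma> * exp (- D * L))))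
     in \<eta> * cinf)"
proof -
  define D where "D = \<delta>bar + \<gamma>bar"
  have \<gamma>_pos: "\<gamma> > 0" and \<gamma>_le: "\<gamma> \<le> \<gamma>bar"
    using \<gamma> by auto
  obtain n :: nat where n: "n > 0" "\<delta>bar \<le> n * \<gamma>" "n * \<gamma> < \<delta>bar + \<gamma>"
    using exists_nat_mult_between[OF \<delta>_pos \<gamma>_pos] by blast
  have tau_le: "\<tau> \<gamma> w \<le> (1 + \<gamma> * L) * w" if "w \<ge> 0" for w
    using tau_lip[OF \<gamma>, of w] tau_zero[OF \<gamma>] that
    by (cases "w = 0") (auto simp: pos_divide_le_eq mult.commute)
  have power_le: "(1 + \<gamma> * L) ^ n \<le> exp (D * L)"
    using n(3) \<gamma>_pos \<gamma>_le L by (intro power_one_plus_mult_le_exp) (simp_all add: D_def)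
  define \<zeta> where "\<zeta> = 2 * (1 + \<gamma>bar * L)\<^sup>2 * \<sigma>\<^sup>2 / (2 * sqrt (2 * pi))
    * ((SUP t\<in>{0..}. t\<^sup>2 * Phi (- t)) + 1 / 8)"
  define X where "X = ((1 + \<gamma>bar * L) * R + D * cinf) / (2 * sqrt \<delta>bar * \<sigma> * exp (- D * L))"
  have "measure \<mu> {0<..<R} \<le> sqrt (n * \<gamma>) * (1 + \<gamma> * L) ^ n / (\<sigma> * sqrt (2 * pi))
      / Phi (- (R * (1 + \<gamma> * L) ^ n / (2 * \<sigma> * sqrt (n * \<gamma>)))) * cinf"
    by (rule invariant_prob_measure_Ioo_le[OF \<sigma>_pos \<gamma>_pos c_nonneg L R n(1) inv tau_mono[OF \<gamma>]
        tau_range[OF \<gamma>] tau_le])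
  also have "\<dots> \<le> sqrt D * exp (D * L) / (\<sigma> * sqrt (2 * pi)) / Phi (- X) * cinf"
    unfolding X_def using n \<gamma>_le \<gamma>bar_pos L \<gamma>_pos
    by (intro near_zero_bound_mono[OF \<sigma>_pos c_nonneg R \<delta>_pos _ _ _ power_le])
       (auto simp: D_def add_pos_nonneg)
  also have "\<dots> \<le> sqrt D * (2 * \<zeta> * exp (3 * D * L) / \<sigma> ^ 3 + exp (D * L) / (2 * sqrt (2 * pi) * \<sigma>))
      / Phi (- X) * cinf"
    unfolding \<zeta>_def using \<gamma>bar_pos \<delta>_pos L c_nonneg
    by (intro eta_coefficient_bound \<sigma>_pos Phi_pos) (simp_all add: D_def)
  finally show ?thesis
    unfolding Let_def \<zeta>_def X_def D_def .
qed

end
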